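(* Let $q$ be a prime power, $m\ge 1$, and let $1\le k\le n-1$ be integers. Let $\bar{\mathbb{F}}_{q^m}$ denote the algebraic closure of $\mathbb{F}_{q^m}$. Then the set $$S_{\mathrm{MRD}} := \{X \in \bar{\mathbb{F}}_{q^m}^{k\times (n-k)} \mid \det([\,I_k \mid X\,]\, A)\neq 0 \text{ for all } A \in \mathbb{F}_q^{n\times k} \text{ of rank } k\}$$ is a generic subset of $\bar{\mathbb{F}}_{q^m}^{k\times (n-k)}$.
   Context: We identify $\bar{\mathbb{F}}_{q^m}^{k\times(n-k)}$ with $\bar{\mathbb{F}}_{q}^{r}$, $r=k(n-k)$, by treating the entries of $X$ as coordinates $x_1,\dots,x_r$. The Zariski topology on $\bar{\mathbb{F}}_q^r$ is the topology whose closed sets are the algebraic sets $V(S)=\{\boldsymbol x\in\bar{\mathbb{F}}_q^r \mid f(\boldsymbol x)=0 \ \forall f\in S\}$ for subsets $S\subseteq \mathbb{F}_q[x_1,\dots,x_r]$; Zariski-open sets are their complements. A subset of $\bar{\mathbb{F}}_q^r$ is called generic if it contains a non-empty Zariski-open set. $I_k$ is the $k\times k$ identity matrix. *)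

theory Defs
  imports "HOL-Algebra.Algebraic_Closure_Type" "Jordan_Normal_Form.DL_Rank"
begin

definition is_subfield :: "'a::field set \<Rightarrow> bool" where
  "is_subfield F \<longleftrightarrow> 0 \<in> F \<and> 1 \<in> F \<and> (\<forall>x\<in>F. \<forall>y\<in>F. x + y \<in> F \<and> x * y \<in> F)
      \<and> (\<forall>x\<in>F. - x \<in> F) \<and> (\<forall>x\<in>F. x \<noteq> 0 \<longrightarrow> inverse x \<in> F)"

definition prime_power :: "nat \<Rightarrow> bool" where
  "prime_power q \<longleftrightarrow> (\<exists>p e. prime p \<and> e \<ge> 1 \<and> q = p ^ e)"

definition hconcat :: "'a mat \<Rightarrow> 'a mat \<Rightarrow> 'a mat" where
  "hconcat A B = mat (dim_row A) (dim_col A + dim_col B)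
     (\<lambda>(i, j). if j < dim_col A then A $$ (i, j) else B $$ (i, j - dim_col A))"

text \<open>Polynomial functions with coefficients in the subfield F (embedded into the
  algebraic closure) in the k*l coordinate variables M(i,j), i<k, j<l, of a k x l matrix
  over the algebraic closure.  These are exactly the evaluation maps of the polynomials
  in F[x_1,...,x_r], r = k*l.\<close>
inductive_set polyfun :: "'f::field set \<Rightarrow> nat \<Rightarrow> nat \<Rightarrow> ('f alg_closure mat \<Rightarrow> 'f alg_closure) set"
  for F :: "'f set" and k l :: nat where
  const: "c \<in> F \<Longrightarrow> (\<lambda>M. to_ac c) \<in> polyfun F k l"
| var: "i < k \<Longrightarrow> j < l \<Longrightarrow> (\<lambda>M. M $$ (i, j)) \<in> polyfun F k l"
| add: "f \<in> polyfun F k l \<Longrightarrow> g \<in> polyfun F k l \<Longrightarrow> (\<lambda>M. f M + g M) \<in> polyfun F k l"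
| mult: "f \<in> polyfun F k l \<Longrightarrow> g \<in> polyfun F k l \<Longrightarrow> (\<lambda>M. f M * g M) \<in> polyfun F k l"

definition zariski_open :: "'f::field set \<Rightarrow> nat \<Rightarrow> nat \<Rightarrow> 'f alg_closure mat set \<Rightarrow> bool" where
  "zariski_open F k l U \<longleftrightarrow> (\<exists>S. S \<subseteq> polyfun F k l \<and>
      U = carrier_mat k l - {M \<in> carrier_mat k l. \<forall>f\<in>S. f M = 0})"

definition generic :: "'f::field set \<Rightarrow> nat \<Rightarrow> nat \<Rightarrow> 'f alg_closure mat set \<Rightarrow> bool" where
  "generic F k l T \<longleftrightarrow> (\<exists>U. zariski_open F k l U \<and> U \<noteq> {} \<and> U \<subseteq> T)"

text \<open>The set S_MRD; Fq is the subfield F_q of the field F_{q^m} (the type 'f),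
  and the algebraic closure of F_{q^m} is the type 'f alg_closure.\<close>
definition S_MRD :: "'f::field set \<Rightarrow> nat \<Rightarrow> nat \<Rightarrow> 'f alg_closure mat set" where
  "S_MRD Fq n k = {M \<in> carrier_mat k (n - k).
     \<forall>A \<in> carrier_mat n k. (\<forall>i<n. \<forall>j<k. A $$ (i, j) \<in> Fq) \<longrightarrow> vec_space.rank n A = k \<longrightarrow>
        det (hconcat (1\<^sub>m k) M * map_mat to_ac A) \<noteq> 0}"

end

theory Submission
  imports Defs "Jordan_Normal_Form.Char_Poly"
begin

text \<open>For each full-rank A over F_q, det([I | X] A) is a polynomial in the entries of X with
  coefficients in F_q, and there are finitely many such A, so S_MRD contains the Zariski-open set
  where all of them are nonzero.  This set is non-empty: each determinant is nonzero at some X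
  (built from a left inverse of A), and over the infinite algebraic closure finitely many
  polynomials that are not identically zero have a common non-root.\<close>

lemma infinite_UNIV_alg_closed_field: "infinite (UNIV :: 'a::alg_closed_field set)"
proof
  assume fin: "finite (UNIV :: 'a set)"
  define q :: "'a poly" where "q = (\<Prod>a\<in>UNIV. [:-a, 1:])"
  have "degree q = card (UNIV :: 'a set)"
    unfolding q_def by (simp add: degree_prod_eq_sum_degree)
  moreover have "card (UNIV :: 'a set) > 0"
    using fin by (simp add: finite_UNIV_card_ge_0)
  ultimately have "degree (q + 1) > 0"
    by (metis degree_add_eq_left degree_1)
  then obtain x where "poly (q + 1) x = 0"
    using alg_closed_imp_poly_has_root by blast
  moreover have "poly q x = 0"
    unfolding q_def by (simp add: poly_prod fin)
  ultimately show False by simp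
qed

section \<open>Rings of functions and polynomial functions\<close>

definition fun_subring :: "('b \<Rightarrow> 'a::comm_ring_1) set \<Rightarrow> bool" where
  "fun_subring C \<longleftrightarrow> (\<lambda>_. 0) \<in> C \<and> (\<lambda>_. 1) \<in> C \<and> (\<lambda>_. -1) \<in> C \<and>
     (\<forall>f\<in>C. \<forall>g\<in>C. (\<lambda>x. f x + g x) \<in> C \<and> (\<lambda>x. f x * g x) \<in> C)"

lemma fun_subring_mult:
  "fun_subring C \<Longrightarrow> f \<in> C \<Longrightarrow> g \<in> C \<Longrightarrow> (\<lambda>x. f x * g x) \<in> C"
  unfolding fun_subring_def by blast

lemma fun_subring_sum:
  assumes "fun_subring C" and "finite S" and "\<And>s. s \<in> S \<Longrightarrow> g s \<in> C"
  shows "(\<lambda>x. \<Sum>s\<in>S. g s x) \<in> C"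
  using assms(2,3) by (induction S rule: finite_induct)
    (use assms(1) in \<open>auto simp: fun_subring_def\<close>)

lemma fun_subring_prod:
  assumes "fun_subring C" and "finite S" and "\<And>s. s \<in> S \<Longrightarrow> g s \<in> C"
  shows "(\<lambda>x. \<Prod>s\<in>S. g s x) \<in> C"
  using assms(2,3) by (induction S rule: finite_induct)
    (use assms(1) in \<open>auto simp: fun_subring_def\<close>)

inductive_set poly_funs :: "'v set \<Rightarrow> (('v \<Rightarrow> 'a::comm_ring_1) \<Rightarrow> 'a) set" for V where
  const: "(\<lambda>x. c) \<in> poly_funs V"
| var: "v \<in> V \<Longrightarrow> (\<lambda>x. x v) \<in> poly_funs V"
| add: "f \<in> poly_funs V \<Longrightarrow> g \<in> poly_funs V \<Longrightarrow> (\<lambda>x. f x + g x) \<in> poly_funs V"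
| mult: "f \<in> poly_funs V \<Longrightarrow> g \<in> poly_funs V \<Longrightarrow> (\<lambda>x. f x * g x) \<in> poly_funs V"

lemma fun_subring_poly_funs: "fun_subring (poly_funs V)"
  unfolding fun_subring_def by (auto intro: poly_funs.intros)

lemma poly_funs_cong: "f \<in> poly_funs V \<Longrightarrow> (\<And>v. v \<in> V \<Longrightarrow> x v = y v) \<Longrightarrow> f x = f y"
  by (induction rule: poly_funs.induct) auto

lemma poly_funs_insert_poly:
  assumes "f \<in> poly_funs (insert v V)"
  shows "\<exists>P. (\<forall>x. f x = poly (P x) (x v)) \<and> (\<forall>i. (\<lambda>x. coeff (P x) i) \<in> poly_funs V)"
  using assms
proof (induction rule: poly_funs.induct)
  case (const c)
  have "(\<lambda>x. coeff [:c:] i) \<in> poly_funs V" for i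
    by (cases i) (auto intro: poly_funs.const)
  then show ?case by (intro exI[of _ "\<lambda>x. [:c:]"]) auto
next
  case (var w)
  show ?case
  proof (cases "w = v")
    case True
    have "(\<lambda>x. coeff [:0, 1:] i) \<in> poly_funs V" for i :: nat
      by (rule poly_funs.const)
    then show ?thesis using True by (intro exI[of _ "\<lambda>x. [:0, 1:]"]) auto
  next
    case False
    then have "w \<in> V" using var by simp
    then have "(\<lambda>x. coeff [:x w:] i) \<in> poly_funs V" for i
      by (cases i) (auto intro: poly_funs.intros)
    then show ?thesis by (intro exI[of _ "\<lambda>x. [:x w:]"]) auto
  qed
next
  case (add f g)
  then obtain P Q where "\<forall>x. f x = poly (P x) (x v)" "\<forall>i. (\<lambda>x. coeff (P x) i) \<in> poly_funs V"
    and "\<forall>x. g x = poly (Q x) (x v)" "\<forall>i. (\<lambda>x. coeff (Q x) i) \<in> poly_funs V" by blast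
  then show ?case
    by (intro exI[of _ "\<lambda>x. P x + Q x"]) (auto intro: poly_funs.add)
next
  case (mult f g)
  then obtain P Q where P: "\<forall>x. f x = poly (P x) (x v)" "\<forall>i. (\<lambda>x. coeff (P x) i) \<in> poly_funs V"
    and Q: "\<forall>x. g x = poly (Q x) (x v)" "\<forall>i. (\<lambda>x. coeff (Q x) i) \<in> poly_funs V" by blast
  have "(\<lambda>x. coeff (P x * Q x) i) \<in> poly_funs V" for i
    unfolding coeff_mult using P(2) Q(2)
    by (intro fun_subring_sum[OF fun_subring_poly_funs]) (auto intro: poly_funs.mult)
  then show ?case
    using P(1) Q(1) by (intro exI[of _ "\<lambda>x. P x * Q x"]) auto
qed

lemma polys_common_nonroot:
  fixes p :: "'b \<Rightarrow> 'a::idom poly"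
  assumes "infinite (UNIV :: 'a set)" and "finite F" and "\<And>f. f \<in> F \<Longrightarrow> p f \<noteq> 0"
  shows "\<exists>c. \<forall>f\<in>F. poly (p f) c \<noteq> 0"
proof -
  have "finite (\<Union>f\<in>F. {t. poly (p f) t = 0})"
    using assms(2,3) poly_roots_finite by blast
  then obtain c where "c \<notin> (\<Union>f\<in>F. {t. poly (p f) t = 0})"
    using ex_new_if_finite[OF assms(1)] by blast
  then show ?thesis by blast
qed

text \<open>Induction on the variables: each function is a polynomial in the new variable whose
  coefficients are polynomial functions of the old ones; by induction some nonzero coefficients
  have a common non-root, and then only finitely many values of the new variable are bad.\<close>
lemma poly_funs_common_nonzero:
  fixes F :: "(('v \<Rightarrow> 'a::idom) \<Rightarrow> 'a) set"
  assumes inf: "infinite (UNIV :: 'a set)"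
    and "finite V" "finite F" "F \<subseteq> poly_funs V" "\<And>f. f \<in> F \<Longrightarrow> \<exists>x. f x \<noteq> 0"
  shows "\<exists>x. \<forall>f\<in>F. f x \<noteq> 0"
  using assms(2-)
proof (induction V arbitrary: F rule: finite_induct)
  case empty
  have "f undefined \<noteq> 0" if f: "f \<in> F" for f
  proof -
    obtain y where "f y \<noteq> 0" using empty.prems(3) f by blast
    moreover have "f undefined = f y" using f empty.prems(2) by (intro poly_funs_cong[of f "{}"]) auto
    ultimately show ?thesis by simp
  qed
  then show ?case by blast
next
  case (insert v V)
  have "\<forall>f\<in>F. \<exists>P. (\<forall>x. f x = poly (P x) (x v)) \<and> (\<forall>i. (\<lambda>x. coeff (P x) i) \<in> poly_funs V)"
    using insert.prems(2) by (auto intro: poly_funs_insert_poly)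
  then obtain P where "\<forall>f\<in>F. (\<forall>x. f x = poly (P f x) (x v)) \<and> (\<forall>i. (\<lambda>x. coeff (P f x) i) \<in> poly_funs V)"
    by (rule bchoice[THEN exE])
  then have P: "\<And>f x. f \<in> F \<Longrightarrow> f x = poly (P f x) (x v)"
    and P_coeff: "\<And>f i. f \<in> F \<Longrightarrow> (\<lambda>x. coeff (P f x) i) \<in> poly_funs V"
    by blast+
  have "\<exists>i y. coeff (P f y) i \<noteq> 0" if f: "f \<in> F" for f
  proof -
    obtain y where "f y \<noteq> 0" using insert.prems(3) f by blast
    then have "P f y \<noteq> 0" using P[OF f, of y] by auto
    then show ?thesis using leading_coeff_neq_0 by blast
  qed
  then obtain d where d: "\<And>f. f \<in> F \<Longrightarrow> \<exists>y. coeff (P f y) (d f) \<noteq> 0" by metis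
  have "\<exists>x. \<forall>g\<in>(\<lambda>f x. coeff (P f x) (d f)) ` F. g x \<noteq> 0"
  proof (rule insert.IH)
    show "finite ((\<lambda>f x. coeff (P f x) (d f)) ` F)" using insert.prems(1) by simp
    show "(\<lambda>f x. coeff (P f x) (d f)) ` F \<subseteq> poly_funs V" using P_coeff by blast
    show "\<And>g. g \<in> (\<lambda>f x. coeff (P f x) (d f)) ` F \<Longrightarrow> \<exists>x. g x \<noteq> 0" using d by blast
  qed
  then obtain x where "\<And>f. f \<in> F \<Longrightarrow> coeff (P f x) (d f) \<noteq> 0" by auto
  then have x: "\<And>f. f \<in> F \<Longrightarrow> P f x \<noteq> 0" by (metis coeff_0)
  obtain c where c: "\<And>f. f \<in> F \<Longrightarrow> poly (P f x) c \<noteq> 0"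
    using polys_common_nonroot[OF inf insert.prems(1), of "\<lambda>f. P f x"] x by blast
  have "P f (x(v := c)) = P f x" if "f \<in> F" for f
  proof (rule poly_eqI)
    show "coeff (P f (x(v := c))) i = coeff (P f x) i" for i
      using insert.hyps(2) by (intro poly_funs_cong[OF P_coeff[OF that]]) auto
  qed
  then have "f (x(v := c)) \<noteq> 0" if "f \<in> F" for f
    using P[OF that, of "x(v := c)"] c[OF that] that by simp
  then show ?case by blast
qed

lemma hconcat_carrier [simp]:
  "A \<in> carrier_mat nr a \<Longrightarrow> B \<in> carrier_mat nr b \<Longrightarrow> hconcat A B \<in> carrier_mat nr (a + b)"
  unfolding hconcat_def by auto

definition entrywise_in :: "('b \<Rightarrow> 'a) set \<Rightarrow> nat \<Rightarrow> nat \<Rightarrow> ('b \<Rightarrow> 'a mat) \<Rightarrow> bool" where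
  "entrywise_in C nr nc \<Phi> \<longleftrightarrow>
     (\<forall>x. \<Phi> x \<in> carrier_mat nr nc) \<and> (\<forall>i<nr. \<forall>j<nc. (\<lambda>x. \<Phi> x $$ (i, j)) \<in> C)"

lemma entrywise_in_const:
  assumes "B \<in> carrier_mat nr nc" and "\<And>i j. i < nr \<Longrightarrow> j < nc \<Longrightarrow> (\<lambda>_. B $$ (i, j)) \<in> C"
  shows "entrywise_in C nr nc (\<lambda>_. B)"
  using assms unfolding entrywise_in_def by blast

lemma entrywise_in_one:
  assumes "fun_subring C"
  shows "entrywise_in C k k (\<lambda>_. 1\<^sub>m k)"
proof (rule entrywise_in_const)
  fix i j assume "i < k" "j < k"
  then show "(\<lambda>_. 1\<^sub>m k $$ (i, j)) \<in> C"
    using assms by (cases "i = j") (auto simp: fun_subring_def)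
qed simp

lemma entrywise_in_mult:
  assumes C: "fun_subring C" and \<Phi>: "entrywise_in C nr m \<Phi>" and \<Psi>: "entrywise_in C m nc \<Psi>"
  shows "entrywise_in C nr nc (\<lambda>x. \<Phi> x * \<Psi> x)"
  unfolding entrywise_in_def
proof (intro conjI allI impI)
  have carr: "\<Phi> x \<in> carrier_mat nr m" "\<Psi> x \<in> carrier_mat m nc" for x
    using \<Phi> \<Psi> unfolding entrywise_in_def by blast+
  then show "\<Phi> x * \<Psi> x \<in> carrier_mat nr nc" for x by (metis mult_carrier_mat)
  fix i j assume i: "i < nr" and j: "j < nc"
  have "(\<lambda>x. (\<Phi> x * \<Psi> x) $$ (i, j)) = (\<lambda>x. \<Sum>l\<in>{0..<m}. \<Phi> x $$ (i, l) * \<Psi> x $$ (l, j))"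
  proof
    fix x
    show "(\<Phi> x * \<Psi> x) $$ (i, j) = (\<Sum>l\<in>{0..<m}. \<Phi> x $$ (i, l) * \<Psi> x $$ (l, j))"
      using carr[of x] i j by (auto simp: scalar_prod_def intro!: sum.cong)
  qed
  also have "\<dots> \<in> C"
    using \<Phi> \<Psi> i j unfolding entrywise_in_def
    by (intro fun_subring_sum[OF C] fun_subring_mult[OF C]) auto
  finally show "(\<lambda>x. (\<Phi> x * \<Psi> x) $$ (i, j)) \<in> C" .
qed

lemma entrywise_in_hconcat:
  assumes \<Phi>: "entrywise_in C nr a \<Phi>" and \<Psi>: "entrywise_in C nr b \<Psi>"
  shows "entrywise_in C nr (a + b) (\<lambda>x. hconcat (\<Phi> x) (\<Psi> x))"
  unfolding entrywise_in_def
proof (intro conjI allI impI)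
  have carr: "\<Phi> x \<in> carrier_mat nr a" "\<Psi> x \<in> carrier_mat nr b" for x
    using \<Phi> \<Psi> unfolding entrywise_in_def by blast+
  then have [simp]: "dim_row (\<Phi> x) = nr" "dim_col (\<Phi> x) = a" "dim_col (\<Psi> x) = b" for x
    by auto
  show "hconcat (\<Phi> x) (\<Psi> x) \<in> carrier_mat nr (a + b)" for x
    using carr[of x] by simp
  fix i j assume i: "i < nr" and j: "j < a + b"
  have "(\<lambda>x. hconcat (\<Phi> x) (\<Psi> x) $$ (i, j)) =
      (if j < a then (\<lambda>x. \<Phi> x $$ (i, j)) else (\<lambda>x. \<Psi> x $$ (i, j - a)))"
    using carr i j by (intro ext) (auto simp: hconcat_def)
  then show "(\<lambda>x. hconcat (\<Phi> x) (\<Psi> x) $$ (i, j)) \<in> C"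
    using \<Phi> \<Psi> i j unfolding entrywise_in_def by auto
qed

lemma fun_subring_det:
  assumes C: "fun_subring C" and \<Phi>: "entrywise_in C d d \<Phi>"
  shows "(\<lambda>x. det (\<Phi> x)) \<in> C"
proof -
  have [simp]: "dim_row (\<Phi> x) = d" "dim_col (\<Phi> x) = d" for x
    using \<Phi> unfolding entrywise_in_def by auto
  have "(\<lambda>x. det (\<Phi> x)) =
      (\<lambda>x. \<Sum>p\<in>{p. p permutes {0..<d}}. signof p * (\<Prod>i\<in>{0..<d}. \<Phi> x $$ (i, p i)))"
    unfolding det_def by simp
  also have "\<dots> \<in> C"
  proof (intro fun_subring_sum[OF C] fun_subring_mult[OF C] fun_subring_prod[OF C])
    fix p assume p: "p \<in> {p. p permutes {0..<d}}"
    show "(\<lambda>x. signof p) \<in> C"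
      using C by (cases p rule: sign_cases) (auto simp: fun_subring_def)
    show "(\<lambda>x. \<Phi> x $$ (i, p i)) \<in> C" if "i \<in> {0..<d}" for i
      using \<Phi> p that permutes_in_image[of p "{0..<d}" i] unfolding entrywise_in_def by auto
  qed (simp_all add: finite_permutations)
  finally show ?thesis .
qed

lemma det_hconcat_one_mult_in:
  assumes C: "fun_subring C" and \<Phi>: "entrywise_in C k l \<Phi>" and A: "A \<in> carrier_mat (k + l) k"
    and A_const: "\<And>i j. i < k + l \<Longrightarrow> j < k \<Longrightarrow> (\<lambda>_. A $$ (i, j)) \<in> C"
  shows "(\<lambda>x. det (hconcat (1\<^sub>m k) (\<Phi> x) * A)) \<in> C"
  using entrywise_in_hconcat[OF entrywise_in_one[OF C] \<Phi>] entrywise_in_const[OF A A_const]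
  by (intro fun_subring_det[OF C] entrywise_in_mult[OF C])

section \<open>Generic sets of matrices\<close>

lemma fun_subring_polyfun: "is_subfield F \<Longrightarrow> fun_subring (polyfun F k l)"
  using polyfun.const[of 0 F k l] polyfun.const[of 1 F k l] polyfun.const[of "-1" F k l]
  unfolding fun_subring_def is_subfield_def by (auto intro: polyfun.intros)

lemma entrywise_in_polyfun_entries: "entrywise_in (polyfun F k l) k l (\<lambda>M. mat k l (($$) M))"
  unfolding entrywise_in_def by (auto intro: polyfun.var)

lemma poly_funs_of_polyfun:
  "f \<in> polyfun F k l \<Longrightarrow> (\<lambda>x. f (mat k l x)) \<in> poly_funs ({..<k} \<times> {..<l})"
  by (induction rule: polyfun.induct) (auto intro: poly_funs.intros)

lemma mat_index_carrier: "M \<in> carrier_mat nr nc \<Longrightarrow> mat nr nc (($$) M) = M"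
  by (intro eq_matI) auto

lemma generic_nonvanishing:
  fixes Fs :: "('f::field alg_closure mat \<Rightarrow> 'f alg_closure) set"
  assumes F: "is_subfield F" and fin: "finite Fs" and poly: "Fs \<subseteq> polyfun F k l"
    and nonzero: "\<And>f. f \<in> Fs \<Longrightarrow> \<exists>M \<in> carrier_mat k l. f M \<noteq> 0"
  shows "generic F k l {M \<in> carrier_mat k l. \<forall>f\<in>Fs. f M \<noteq> 0}"
proof -
  define P where "P M = (\<Prod>f\<in>Fs. f M)" for M
  have "P \<in> polyfun F k l"
    unfolding P_def using poly by (intro fun_subring_prod[OF fun_subring_polyfun[OF F] fin]) auto
  then have "zariski_open F k l {M \<in> carrier_mat k l. \<forall>f\<in>Fs. f M \<noteq> 0}"
    unfolding zariski_open_def using fin by (intro exI[of _ "{P}"]) (auto simp: P_def)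
  moreover have "\<exists>x. \<forall>g\<in>(\<lambda>f x. f (mat k l x)) ` Fs. g x \<noteq> 0"
  proof (rule poly_funs_common_nonzero[OF infinite_UNIV_alg_closed_field])
    show "(\<lambda>f x. f (mat k l x)) ` Fs \<subseteq> poly_funs ({..<k} \<times> {..<l})"
      using poly poly_funs_of_polyfun by blast
    show "\<exists>x. g x \<noteq> 0" if g_in: "g \<in> (\<lambda>f x. f (mat k l x)) ` Fs" for g
    proof -
      obtain f where f: "f \<in> Fs" and g: "g = (\<lambda>x. f (mat k l x))" using g_in by blast
      then obtain M where "M \<in> carrier_mat k l" and "f M \<noteq> 0" using nonzero by blast
      then have "g (($$) M) \<noteq> 0" unfolding g by (simp add: mat_index_carrier)
      then show ?thesis by blast
    qed
  qed (use fin in auto)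
  then obtain x where "\<forall>f\<in>Fs. f (mat k l x) \<noteq> 0" by auto
  then have "mat k l x \<in> {M \<in> carrier_mat k l. \<forall>f\<in>Fs. f M \<noteq> 0}" by simp
  ultimately show ?thesis unfolding generic_def by blast
qed

section \<open>Matrices [I | X] A with nonzero determinant\<close>

lemma (in vec_space) full_rank_mult_vec_eq_0:
  assumes A: "A \<in> carrier_mat n k" and r: "rank A = k"
    and v: "v \<in> carrier_vec k" and Av: "A *\<^sub>v v = 0\<^sub>v n"
  shows "v = 0\<^sub>v k"
proof (rule ccontr)
  assume nz: "v \<noteq> 0\<^sub>v k"
  show False
  proof (cases "distinct (cols A)")
    case True
    then show False
      using full_rank_lin_indpt[OF A r True] lin_depI[OF A v nz Av True] by simp
  next
    case False
    obtain S where S: "maximal S (\<lambda>T. T \<subseteq> set (cols A) \<and> lin_indpt T)"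
      using maximal_exists[of "\<lambda>T. T \<subseteq> set (cols A) \<and> lin_indpt T" "card (set (cols A))" "{}"]
      by (meson List.finite_set card_mono empty_iff empty_subsetI finite_lin_indpt2 rev_finite_subset)
    then have "card S \<le> card (set (cols A))" by (simp add: card_mono maximal_def)
    also have "\<dots> < length (cols A)"
      using False card_length card_distinct le_neq_implies_less by blast
    finally show False using rank_card_indpt[OF A S] r A by simp
  qed
qed

lemma pivot_fun_zero_rows_below:
  fixes C :: "'a::semiring_1 mat"
  assumes piv: "pivot_fun C f nc" and C: "C \<in> carrier_mat nr nc"
    and "i0 \<le> i" "i < nr" and f_i0: "f i0 = nc"
  shows "row C i = 0\<^sub>v nc"
proof -
  have "f (i0 + (i - i0)) = nc \<or> f (i0 + (i - i0)) \<ge> (i - i0) + f i0"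
    using assms by (intro pivot_bound[of C nr f nc]) auto
  then have "f i = nc"
    using pivot_funD(1)[of C nr f nc i] assms by auto
  then show ?thesis using pivot_fun_zero_row_iff[OF piv C \<open>i < nr\<close>] by simp
qed

lemma pivot_fun_top_block:
  assumes piv: "pivot_fun C f k" and C: "C \<in> carrier_mat n k" and kn: "k \<le> n"
  shows "pivot_fun (mat k k (\<lambda>(i, j). C $$ (i, j))) f k"
proof (rule pivot_funI)
  have dC: "dim_row C = n" using C by simp
  note pd = pivot_funD[OF dC piv]
  fix i assume i: "i < k"
  then have i': "i < n" using kn by simp
  show "f i \<le> k" using pd(1)[OF i'] .
  show "\<And>j. j < f i \<Longrightarrow> mat k k (\<lambda>(i, j). C $$ (i, j)) $$ (i, j) = 0"
    using pd(2)[OF i'] pd(1)[OF i'] i by auto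
  show "Suc i < k \<Longrightarrow> f i < f (Suc i) \<or> f (Suc i) = k" using pd(3)[OF i'] kn by simp
  show "f i < k \<Longrightarrow> mat k k (\<lambda>(i, j). C $$ (i, j)) $$ (i, f i) = 1" using pd(4)[OF i'] i by auto
  show "\<And>i'. f i < k \<Longrightarrow> i' < k \<Longrightarrow> i' \<noteq> i \<Longrightarrow> mat k k (\<lambda>(i, j). C $$ (i, j)) $$ (i', f i) = 0"
    using pd(5)[OF i'] kn by auto
qed simp

lemma mult_vec_eq_0_of_top_block:
  assumes C: "C \<in> carrier_mat n k" and kn: "k \<le> n"
    and zero_rows: "\<And>i. k \<le> i \<Longrightarrow> i < n \<Longrightarrow> row C i = 0\<^sub>v k"
    and v: "v \<in> carrier_vec k" and top: "mat k k (\<lambda>(i, j). C $$ (i, j)) *\<^sub>v v = 0\<^sub>v k"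
  shows "C *\<^sub>v v = 0\<^sub>v n"
proof (rule eq_vecI)
  fix i assume "i < dim_vec (0\<^sub>v n)"
  then have i: "i < n" by simp
  let ?Ct = "mat k k (\<lambda>(i, j). C $$ (i, j))"
  show "(C *\<^sub>v v) $ i = 0\<^sub>v n $ i"
  proof (cases "i < k")
    case True
    have "(C *\<^sub>v v) $ i = row C i \<bullet> v" using i C by simp
    also have "row C i = row ?Ct i" using True C by (auto simp: row_def)
    also have "row ?Ct i \<bullet> v = (?Ct *\<^sub>v v) $ i" using True by simp
    also have "\<dots> = 0" unfolding top using True by simp
    finally show ?thesis using i by simp
  next
    case False
    then show ?thesis using zero_rows[of i] i C v by simp
  qed
qed (use C in simp)

text \<open>If the top square block were not the identity, its last row would vanish, hence so would
  all rows below it, and a kernel vector of the top block would be one of the whole matrix.\<close>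
lemma row_echelon_form_top_block_eq_one:
  fixes C :: "'a::field mat"
  assumes C: "C \<in> carrier_mat n k" and kn: "k \<le> n" and ref: "row_echelon_form C"
    and ker: "\<And>v. v \<in> carrier_vec k \<Longrightarrow> C *\<^sub>v v = 0\<^sub>v n \<Longrightarrow> v = 0\<^sub>v k"
  shows "mat k k (\<lambda>(i, j). C $$ (i, j)) = 1\<^sub>m k"
proof (rule ccontr)
  define Ct where "Ct = mat k k (\<lambda>(i, j). C $$ (i, j))"
  have Ct: "Ct \<in> carrier_mat k k" unfolding Ct_def by simp
  obtain f where piv: "pivot_fun C f k" using ref C unfolding row_echelon_form_def by auto
  have pivt: "pivot_fun Ct f k" unfolding Ct_def by (rule pivot_fun_top_block[OF piv C kn])
  then have reft: "row_echelon_form Ct" unfolding row_echelon_form_def using Ct by auto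
  assume "mat k k (\<lambda>(i, j). C $$ (i, j)) \<noteq> 1\<^sub>m k"
  then have ne: "Ct \<noteq> 1\<^sub>m k" unfolding Ct_def .
  then have k0: "k > 0" and "row Ct (k - 1) = 0\<^sub>v k"
    using row_echelon_form_imp_1_or_0_row[OF Ct reft] by auto
  then have "f (k - 1) = k" using pivot_fun_zero_row_iff[OF pivt Ct, of "k - 1"] by simp
  then have zero_rows: "row C i = 0\<^sub>v k" if "k - 1 \<le> i" "i < n" for i
    by (rule pivot_fun_zero_rows_below[OF piv C that])
  define v where "v = find_base_vector Ct"
  have v: "v \<in> carrier_vec k" "v \<noteq> 0\<^sub>v k" "Ct *\<^sub>v v = 0\<^sub>v k"
    using find_base_vector_not_1[OF reft Ct ne] unfolding v_def by auto
  have "C *\<^sub>v v = 0\<^sub>v n"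
    using zero_rows v(1,3) unfolding Ct_def by (intro mult_vec_eq_0_of_top_block[OF C kn]) auto
  then show False using ker v by blast
qed

lemma trivial_kernel_imp_left_inverse:
  fixes A :: "'a::field mat"
  assumes A: "A \<in> carrier_mat n k" and kn: "k \<le> n"
    and ker: "\<And>v. v \<in> carrier_vec k \<Longrightarrow> A *\<^sub>v v = 0\<^sub>v n \<Longrightarrow> v = 0\<^sub>v k"
  shows "\<exists>D \<in> carrier_mat k n. D * A = 1\<^sub>m k"
proof -
  define C where "C = gauss_jordan_single A"
  note gj = gauss_jordan_single[OF A C_def[symmetric]]
  obtain P where CPA: "C = P * A" and P: "P \<in> carrier_mat n n" using gj(4) by auto
  have top: "mat k k (\<lambda>(i, j). C $$ (i, j)) = 1\<^sub>m k"
    using gj(1) ker by (intro row_echelon_form_top_block_eq_one[OF gj(2) kn gj(3)]) blast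
  define D where "D = mat k n (\<lambda>(i, j). P $$ (i, j))"
  have D: "D \<in> carrier_mat k n" unfolding D_def by simp
  have "D * A = 1\<^sub>m k"
  proof (rule eq_matI)
    fix i j assume "i < dim_row (1\<^sub>m k :: 'a mat)" "j < dim_col (1\<^sub>m k :: 'a mat)"
    then have i: "i < k" and j: "j < k" by auto
    have "row D i = row P i" using i kn P unfolding D_def by (auto simp: row_def)
    then have "(D * A) $$ (i, j) = (P * A) $$ (i, j)" using i j kn P A D by simp
    also have "\<dots> = mat k k (\<lambda>(i, j). C $$ (i, j)) $$ (i, j)" using i j CPA by simp
    finally show "(D * A) $$ (i, j) = 1\<^sub>m k $$ (i, j)" using top by simp
  qed (use D A in auto)
  then show ?thesis using D by blast
qed

lemma hconcat_mult:
  assumes B: "B \<in> carrier_mat k a" and C: "C \<in> carrier_mat k b" and A: "A \<in> carrier_mat (a + b) c"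
  shows "hconcat B C * A = B * mat a c (\<lambda>(i, j). A $$ (i, j)) + C * mat b c (\<lambda>(i, j). A $$ (i + a, j))"
proof (rule eq_matI)
  fix i j
  assume "i < dim_row (B * mat a c (\<lambda>(i, j). A $$ (i, j)) + C * mat b c (\<lambda>(i, j). A $$ (i + a, j)))"
    and "j < dim_col (B * mat a c (\<lambda>(i, j). A $$ (i, j)) + C * mat b c (\<lambda>(i, j). A $$ (i + a, j)))"
  then have i: "i < k" and j: "j < c" using B C by auto
  let ?H = "hconcat B C"
  have H: "?H \<in> carrier_mat k (a + b)" using B C by simp
  have "(?H * A) $$ (i, j) = (\<Sum>l\<in>{0..<a + b}. ?H $$ (i, l) * A $$ (l, j))"
    using i j A carrier_matD[OF H] by (auto simp: scalar_prod_def intro!: sum.cong)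
  also have "\<dots> = (\<Sum>l\<in>{0..<a}. ?H $$ (i, l) * A $$ (l, j)) + (\<Sum>l\<in>{a..<a + b}. ?H $$ (i, l) * A $$ (l, j))"
    by (simp add: sum.atLeastLessThan_concat)
  also have "(\<Sum>l\<in>{a..<a + b}. ?H $$ (i, l) * A $$ (l, j)) = (\<Sum>l\<in>{0..<b}. ?H $$ (i, l + a) * A $$ (l + a, j))"
    using sum.shift_bounds_nat_ivl[of "\<lambda>l. ?H $$ (i, l) * A $$ (l, j)" 0 a b] by (simp add: add.commute)
  also have "(\<Sum>l\<in>{0..<a}. ?H $$ (i, l) * A $$ (l, j)) = (\<Sum>l\<in>{0..<a}. B $$ (i, l) * A $$ (l, j))"
    using i B C by (intro sum.cong) (auto simp: hconcat_def)
  also have "(\<Sum>l\<in>{0..<b}. ?H $$ (i, l + a) * A $$ (l + a, j)) = (\<Sum>l\<in>{0..<b}. C $$ (i, l) * A $$ (l + a, j))"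
    using i B C by (intro sum.cong) (auto simp: hconcat_def)
  finally show "(?H * A) $$ (i, j) =
      (B * mat a c (\<lambda>(i, j). A $$ (i, j)) + C * mat b c (\<lambda>(i, j). A $$ (i + a, j))) $$ (i, j)"
    using i j B C by (simp add: scalar_prod_def)
qed (use B C A in \<open>auto simp: hconcat_def\<close>)

lemma mult_hconcat:
  assumes Y: "Y \<in> carrier_mat r k" and B: "B \<in> carrier_mat k a" and C: "C \<in> carrier_mat k b"
  shows "Y * hconcat B C = hconcat (Y * B) (Y * C)"
proof (rule eq_matI)
  fix i j assume "i < dim_row (hconcat (Y * B) (Y * C))" "j < dim_col (hconcat (Y * B) (Y * C))"
  then have i: "i < r" and j: "j < a + b" using Y B C by (auto simp: hconcat_def)
  have "col (hconcat B C) j = (if j < a then col B j else col C (j - a))"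
    using j B C by (intro eq_vecI) (auto simp: hconcat_def)
  then show "(Y * hconcat B C) $$ (i, j) = hconcat (Y * B) (Y * C) $$ (i, j)"
    using i j Y B C by (auto simp: hconcat_def)
qed (use Y B C in \<open>auto simp: hconcat_def\<close>)

lemma entrywise_in_poly_funs_affine:
  assumes B: "B \<in> carrier_mat nr nc" and C: "C \<in> carrier_mat nr nc" and v: "v \<in> V"
  shows "entrywise_in (poly_funs V) nr nc (\<lambda>x. B + x v \<cdot>\<^sub>m C)"
  unfolding entrywise_in_def
proof (intro conjI allI impI)
  fix i j assume "i < nr" "j < nc"
  then have "(\<lambda>x. (B + x v \<cdot>\<^sub>m C) $$ (i, j)) = (\<lambda>x. B $$ (i, j) + x v * C $$ (i, j))"
    using B C by auto
  also have "\<dots> \<in> poly_funs V" using v by (intro poly_funs.intros)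
  finally show "(\<lambda>x. (B + x v \<cdot>\<^sub>m C) $$ (i, j)) \<in> poly_funs V" .
qed (use B C in simp)

lemma exists_shift_det_ne_zero:
  fixes D A :: "'a::field mat"
  assumes inf: "infinite (UNIV :: 'a set)" and D: "D \<in> carrier_mat k k" and A: "A \<in> carrier_mat k k"
  shows "\<exists>s. det (D + s \<cdot>\<^sub>m 1\<^sub>m k) \<noteq> 0 \<and> det (1\<^sub>m k + s \<cdot>\<^sub>m A) \<noteq> 0"
proof -
  define \<phi> :: "(unit \<Rightarrow> 'a) \<Rightarrow> 'a" where "\<phi> x = det (D + x () \<cdot>\<^sub>m 1\<^sub>m k)" for x
  define \<psi> :: "(unit \<Rightarrow> 'a) \<Rightarrow> 'a" where "\<psi> x = det (1\<^sub>m k + x () \<cdot>\<^sub>m A)" for x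
  have \<phi>_poly: "\<phi> \<in> poly_funs {()}" and \<psi>_poly: "\<psi> \<in> poly_funs {()}"
    unfolding \<phi>_def \<psi>_def using D A
    by (auto intro!: fun_subring_det[OF fun_subring_poly_funs] entrywise_in_poly_funs_affine)
  have "1\<^sub>m k + 0 \<cdot>\<^sub>m A = 1\<^sub>m k" using A by (intro eq_matI) auto
  then have \<psi>_nonzero: "\<psi> (\<lambda>_. 0) \<noteq> 0" unfolding \<psi>_def by simp
  have "char_poly (- D) \<noteq> 0"
    using degree_monic_char_poly[of "- D" k] D by auto
  then obtain t where t: "poly (char_poly (- D)) t \<noteq> 0"
    using poly_roots_finite ex_new_if_finite[OF inf] by blast
  have "- char_matrix (- D) t = D + t \<cdot>\<^sub>m 1\<^sub>m k"
    using D by (intro eq_matI) (auto simp: char_matrix_def)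
  then have \<phi>_nonzero: "\<phi> (\<lambda>_. t) \<noteq> 0"
    using t char_poly_matrix[of "- D" k] D unfolding \<phi>_def by simp
  obtain x where "\<forall>f\<in>{\<phi>, \<psi>}. f x \<noteq> 0"
    using poly_funs_common_nonzero[OF inf, of "{()}" "{\<phi>, \<psi>}"] \<phi>_poly \<psi>_poly \<phi>_nonzero \<psi>_nonzero
    by blast
  then show ?thesis unfolding \<phi>_def \<psi>_def by auto
qed

lemma shift_left_block_mult:
  fixes D1 :: "'a::comm_ring_1 mat"
  assumes D1: "D1 \<in> carrier_mat k k" and D2: "D2 \<in> carrier_mat k l"
    and A1: "A1 \<in> carrier_mat k k" and A2: "A2 \<in> carrier_mat l k"
    and one: "D1 * A1 + D2 * A2 = 1\<^sub>m k"
  shows "(D1 + s \<cdot>\<^sub>m 1\<^sub>m k) * A1 + D2 * A2 = 1\<^sub>m k + s \<cdot>\<^sub>m A1"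
proof -
  have c: "D1 * A1 \<in> carrier_mat k k" "s \<cdot>\<^sub>m A1 \<in> carrier_mat k k" "D2 * A2 \<in> carrier_mat k k"
    using D1 A1 D2 A2 by auto
  have "(D1 + s \<cdot>\<^sub>m 1\<^sub>m k) * A1 = D1 * A1 + s \<cdot>\<^sub>m A1"
    using D1 A1
    by (simp add: add_mult_distrib_mat[of D1 k k _ A1 k] mult_smult_assoc_mat[of "1\<^sub>m k" k k A1 k])
  also have "\<dots> + D2 * A2 = (D1 * A1 + D2 * A2) + s \<cdot>\<^sub>m A1"
    by (simp add: assoc_add_mat[OF c] assoc_add_mat[OF c(1) c(3) c(2)] comm_add_mat[OF c(2) c(3)])
  finally show ?thesis using one by simp
qed

lemma exists_hconcat_one_det_ne_zero:
  fixes A D :: "'a::field mat"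
  assumes inf: "infinite (UNIV :: 'a set)"
    and A: "A \<in> carrier_mat (k + l) k" and D: "D \<in> carrier_mat k (k + l)" and DA: "D * A = 1\<^sub>m k"
  shows "\<exists>M \<in> carrier_mat k l. det (hconcat (1\<^sub>m k) M * A) \<noteq> 0"
proof -
  define D1 where "D1 = mat k k (\<lambda>(i, j). D $$ (i, j))"
  define D2 where "D2 = mat k l (\<lambda>(i, j). D $$ (i, j + k))"
  define A1 where "A1 = mat k k (\<lambda>(i, j). A $$ (i, j))"
  define A2 where "A2 = mat l k (\<lambda>(i, j). A $$ (i + k, j))"
  have D1: "D1 \<in> carrier_mat k k" and D2: "D2 \<in> carrier_mat k l"
    and A1: "A1 \<in> carrier_mat k k" and A2: "A2 \<in> carrier_mat l k"
    unfolding D1_def D2_def A1_def A2_def by auto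
  have split: "hconcat B D2 * A = B * A1 + D2 * A2" if "B \<in> carrier_mat k k" for B
    unfolding A1_def A2_def using hconcat_mult[OF that D2 A] .
  have "hconcat D1 D2 = D"
    using D unfolding D1_def D2_def hconcat_def by (intro eq_matI) auto
  then have one: "D1 * A1 + D2 * A2 = 1\<^sub>m k" using split[OF D1] DA by simp
  obtain s where s: "det (D1 + s \<cdot>\<^sub>m 1\<^sub>m k) \<noteq> 0" "det (1\<^sub>m k + s \<cdot>\<^sub>m A1) \<noteq> 0"
    using exists_shift_det_ne_zero[OF inf D1 A1] by blast
  define B where "B = D1 + s \<cdot>\<^sub>m 1\<^sub>m k"
  have B: "B \<in> carrier_mat k k" unfolding B_def using D1 by simp
  obtain Y where Y: "Y \<in> carrier_mat k k" and YB: "Y * B = 1\<^sub>m k"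
    using det_non_zero_imp_unit[OF B s(1)[folded B_def]] unfolding Units_def ring_mat_def by auto
  \<comment> \<open>With D = [D1 | D2] and Y the inverse of B = D1 + s I:
    [I | Y D2] A = Y [B | D2] A = Y (D A + s A1) = Y (I + s A1).\<close>
  define M where "M = Y * D2"
  have M: "M \<in> carrier_mat k l" unfolding M_def using Y D2 by simp
  have "hconcat (1\<^sub>m k) M = Y * hconcat B D2"
    unfolding M_def using mult_hconcat[OF Y B D2] YB by simp
  then have "hconcat (1\<^sub>m k) M * A = Y * (hconcat B D2 * A)"
    using Y B D2 A by (simp add: assoc_mult_mat[of Y k k "hconcat B D2" "k + l" A k])
  also have "hconcat B D2 * A = B * A1 + D2 * A2" by (rule split[OF B])
  also have "\<dots> = 1\<^sub>m k + s \<cdot>\<^sub>m A1"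
    unfolding B_def by (rule shift_left_block_mult[OF D1 D2 A1 A2 one])
  finally have "hconcat (1\<^sub>m k) M * A = Y * (1\<^sub>m k + s \<cdot>\<^sub>m A1)" .
  moreover have "det Y \<noteq> 0" using det_mult[OF Y B] YB by auto
  ultimately have "det (hconcat (1\<^sub>m k) M * A) \<noteq> 0"
    using det_mult[OF Y, of "1\<^sub>m k + s \<cdot>\<^sub>m A1"] s(2) A1 by simp
  then show ?thesis using M by blast
qed

interpretation to_ac_hom: comm_ring_hom to_ac
  by unfold_locales simp_all

lemma full_rank_exists_hconcat_one_det_ne_zero:
  fixes A :: "'f::field mat"
  assumes A: "A \<in> carrier_mat n k" and kn: "k \<le> n" and rank: "vec_space.rank n A = k"
  shows "\<exists>M \<in> carrier_mat k (n - k). det (hconcat (1\<^sub>m k) M * map_mat to_ac A) \<noteq> 0"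
proof -
  obtain D where D: "D \<in> carrier_mat k n" and DA: "D * A = 1\<^sub>m k"
    using trivial_kernel_imp_left_inverse[OF A kn] vec_space.full_rank_mult_vec_eq_0[OF A rank]
    by blast
  have "map_mat to_ac D * map_mat to_ac A = 1\<^sub>m k"
    using to_ac_hom.mat_hom_mult[OF D A] DA by (simp add: to_ac_hom.mat_hom_one)
  moreover have "map_mat to_ac A \<in> carrier_mat (k + (n - k)) k"
    and "map_mat to_ac D \<in> carrier_mat k (k + (n - k))"
    using A D kn by auto
  ultimately show ?thesis
    using exists_hconcat_one_det_ne_zero[OF infinite_UNIV_alg_closed_field] by blast
qed

lemma finite_carrier_mat: "finite (carrier_mat nr nc :: 'a::finite mat set)"
proof -
  let ?S = "({0..<nr} \<times> {0..<nc}) \<rightarrow>\<^sub>E (UNIV :: 'a set)"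
  have "carrier_mat nr nc \<subseteq> mat nr nc ` ?S"
  proof
    fix A :: "'a mat" assume A: "A \<in> carrier_mat nr nc"
    let ?f = "restrict (($$) A) ({0..<nr} \<times> {0..<nc})"
    have "A = mat nr nc ?f" using A by (intro eq_matI) auto
    moreover have "?f \<in> ?S" by simp
    ultimately show "A \<in> mat nr nc ` ?S" by (rule image_eqI)
  qed
  moreover have "finite ?S" by (rule finite_PiE) simp_all
  ultimately show ?thesis using finite_subset by blast
qed

lemma generic_det_hconcat_one_ne_zero:
  fixes As :: "'f::field mat set"
  assumes F: "is_subfield F" and fin: "finite As"
    and A: "\<And>A. A \<in> As \<Longrightarrow> A \<in> carrier_mat (k + l) k"
    and A_F: "\<And>A i j. A \<in> As \<Longrightarrow> i < k + l \<Longrightarrow> j < k \<Longrightarrow> A $$ (i, j) \<in> F"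
    and nonzero: "\<And>A. A \<in> As \<Longrightarrow> \<exists>M \<in> carrier_mat k l. det (hconcat (1\<^sub>m k) M * map_mat to_ac A) \<noteq> 0"
  shows "generic F k l {M \<in> carrier_mat k l. \<forall>A\<in>As. det (hconcat (1\<^sub>m k) M * map_mat to_ac A) \<noteq> 0}"
proof -
  define f where "f A M = det (hconcat (1\<^sub>m k) (mat k l (($$) M)) * map_mat to_ac A)"
    for A :: "'f mat" and M
  have "generic F k l {M \<in> carrier_mat k l. \<forall>g\<in>f ` As. g M \<noteq> 0}"
  proof (rule generic_nonvanishing[OF F])
    show "finite (f ` As)" using fin by simp
    show "f ` As \<subseteq> polyfun F k l"
    proof
      fix g assume "g \<in> f ` As"
      then obtain A where A_in: "A \<in> As" and g: "g = f A" by blast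
      show "g \<in> polyfun F k l"
        unfolding g f_def using A[OF A_in] A_F[OF A_in]
        by (intro det_hconcat_one_mult_in[OF fun_subring_polyfun[OF F] entrywise_in_polyfun_entries])
          (auto intro!: polyfun.const)
    qed
    show "\<exists>M \<in> carrier_mat k l. g M \<noteq> 0" if g_in: "g \<in> f ` As" for g
    proof -
      obtain A where "A \<in> As" and g: "g = f A" using g_in by blast
      then obtain M where M: "M \<in> carrier_mat k l" and "det (hconcat (1\<^sub>m k) M * map_mat to_ac A) \<noteq> 0"
        using nonzero by blast
      then have "g M \<noteq> 0" unfolding g f_def using mat_index_carrier[OF M] by simp
      then show ?thesis using M by blast
    qed
  qed
  moreover have "{M \<in> carrier_mat k l. \<forall>g\<in>f ` As. g M \<noteq> 0} =
      {M \<in> carrier_mat k l. \<forall>A\<in>As. det (hconcat (1\<^sub>m k) M * map_mat to_ac A) \<noteq> 0}"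
    by (auto simp: f_def mat_index_carrier)
  ultimately show ?thesis by simp
qed

theorem theorem3p1:
  fixes Fq :: "'f::{field, finite} set" and q m n k :: nat
  assumes "prime_power q" and "m \<ge> 1"
    and "card (UNIV :: 'f set) = q ^ m"
    and sub: "is_subfield Fq" and "card Fq = q"
    and "1 \<le> k" and "k \<le> n - 1"
  shows "generic Fq k (n - k) (S_MRD Fq n k)"
proof -
  have kn: "k \<le> n" using \<open>1 \<le> k\<close> \<open>k \<le> n - 1\<close> by simp
  define As where "As = {A \<in> carrier_mat n k. (\<forall>i<n. \<forall>j<k. A $$ (i, j) \<in> Fq) \<and> vec_space.rank n A = k}"
  have "generic Fq k (n - k)
      {M \<in> carrier_mat k (n - k). \<forall>A\<in>As. det (hconcat (1\<^sub>m k) M * map_mat to_ac A) \<noteq> 0}"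
  proof (rule generic_det_hconcat_one_ne_zero[OF sub])
    show "finite As"
      unfolding As_def by (rule rev_finite_subset[OF finite_carrier_mat[of n k]]) auto
    show "\<exists>M \<in> carrier_mat k (n - k). det (hconcat (1\<^sub>m k) M * map_mat to_ac A) \<noteq> 0" if "A \<in> As" for A
      using that full_rank_exists_hconcat_one_det_ne_zero[OF _ kn] by (auto simp: As_def)
  qed (use kn in \<open>auto simp: As_def\<close>)
  moreover have "{M \<in> carrier_mat k (n - k). \<forall>A\<in>As. det (hconcat (1\<^sub>m k) M * map_mat to_ac A) \<noteq> 0}
      \<subseteq> S_MRD Fq n k"
    by (auto simp: S_MRD_def As_def)
  ultimately show ?thesis unfolding generic_def by blast
qed

end
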